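(* Let $0<a<1$ and, for each integer $n\ge0$, write $(T_a(z))^n=\sum_{m=0}^\infty a_{m,n}z^m$ for $z\in\mathbb D$. Then for every $\alpha>0$ there exists $\rho>0$ (depending on $a$ and $\alpha$) such that for all integers $m,n\ge0$: $$|a_{m,n}|\le e^{-\alpha(\rho n-m)}.$$
   Context: $T_a(z)=\frac{a+z}{1+\bar a z}$ for $a\in\mathbb D$, an automorphism of the unit disk $\mathbb D$. *)

theory Defs
  imports "HOL-Analysis.Analysis"
begin

definition disk_aut :: "complex \<Rightarrow> complex \<Rightarrow> complex" where
  "disk_aut a z = (a + z) / (1 + cnj a * z)"

end

theory Submission
  imports Defs "HOL-Complex_Analysis.Complex_Analysis"
begin

text \<open>On the circle \<open>|z| = r\<close> the automorphism satisfies \<open>|T\<^sub>a(z)| \<le> q := (|a| + r) / (1 + |a| r) < 1\<close>,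
  so by Cauchy's inequality the \<open>m\<close>-th coefficient of \<open>T\<^sub>a\<^sup>n\<close> is at most \<open>q\<^sup>n / r\<^sup>m\<close>.
  Taking \<open>r = exp (- \<alpha>)\<close> and \<open>\<rho> = - ln q / \<alpha>\<close> turns this into \<open>exp (- \<alpha> (\<rho> n - m))\<close>.\<close>

lemma disk_aut_denom_nonzero:
  assumes "cmod a * cmod z < 1"
  shows "1 + cnj a * z \<noteq> 0"
proof
  assume "1 + cnj a * z = 0"
  then have "cmod (cnj a * z) = 1"
    by (metis add.inverse_unique norm_minus_cancel norm_one)
  with assms show False
    by (simp add: norm_mult)
qed

lemma disk_aut_holomorphic:
  assumes "cmod a < 1"
  shows "disk_aut a holomorphic_on ball 0 1"
proof -
  have "1 + cnj a * z \<noteq> 0" if "z \<in> ball 0 1" for z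
    using assms that mult_right_le_one_le[of "cmod a" "cmod z"] by (intro disk_aut_denom_nonzero) simp
  then show ?thesis
    unfolding disk_aut_def by (intro holomorphic_intros) auto
qed

lemma norm_disk_aut_denom_diff:
  "(cmod (1 + cnj a * z))\<^sup>2 - (cmod (a + z))\<^sup>2 = (1 - (cmod a)\<^sup>2) * (1 - (cmod z)\<^sup>2)"
proof -
  have "complex_of_real ((cmod (1 + cnj a * z))\<^sup>2 - (cmod (a + z))\<^sup>2)
      = (1 + cnj a * z) * (1 + a * cnj z) - (a + z) * (cnj a + cnj z)"
    unfolding of_real_diff complex_norm_square by simp
  also have "\<dots> = (1 - a * cnj a) * (1 - z * cnj z)"
    by (simp add: algebra_simps)
  also have "\<dots> = complex_of_real ((1 - (cmod a)\<^sup>2) * (1 - (cmod z)\<^sup>2))"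
    unfolding of_real_mult of_real_diff complex_norm_square by simp
  finally show ?thesis
    using of_real_eq_iff by blast
qed

text \<open>Equality holds at \<open>z = r a / |a|\<close>, so this is the maximum of \<open>|T\<^sub>a|\<close> on the circle \<open>|z| = r\<close>.\<close>

lemma norm_disk_aut_le:
  assumes "cmod a < 1" and "cmod z \<le> 1"
  shows "cmod (disk_aut a z) \<le> (cmod a + cmod z) / (1 + cmod a * cmod z)"
proof -
  define s t where "s = cmod a" and "t = cmod z"
  define D where "D = cmod (1 + cnj a * z)"
  have "s * t < 1"
    using assms mult_right_le_one_le[of s t] by (simp add: s_def t_def)
  then have D_pos: "0 < D"
    using disk_aut_denom_nonzero by (simp add: D_def s_def t_def)
  have D_le: "D \<le> 1 + s * t"
    using norm_triangle_ineq[of 1 "cnj a * z"] by (simp add: D_def s_def t_def norm_mult)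
  have gap_nonneg: "0 \<le> (1 - s\<^sup>2) * (1 - t\<^sup>2)"
    using assms by (simp add: s_def t_def abs_square_le_1)
  have "(cmod (disk_aut a z))\<^sup>2 = 1 - (1 - s\<^sup>2) * (1 - t\<^sup>2) / D\<^sup>2"
    using norm_disk_aut_denom_diff[of a z] D_pos
    by (simp add: disk_aut_def norm_divide power_divide D_def s_def t_def field_simps)
  also have "\<dots> \<le> 1 - (1 - s\<^sup>2) * (1 - t\<^sup>2) / (1 + s * t)\<^sup>2"
    using gap_nonneg D_pos D_le
    by (intro diff_left_mono divide_left_mono power_mono mult_pos_pos) auto
  also have "\<dots> = ((1 + s * t)\<^sup>2 - (1 - s\<^sup>2) * (1 - t\<^sup>2)) / (1 + s * t)\<^sup>2"
    using D_pos D_le by (simp add: diff_divide_distrib)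
  also have "\<dots> = ((s + t) / (1 + s * t))\<^sup>2"
    unfolding power_divide by (simp add: power2_eq_square algebra_simps)
  finally have "(cmod (disk_aut a z))\<^sup>2 \<le> ((s + t) / (1 + s * t))\<^sup>2" .
  then show ?thesis
    unfolding s_def t_def by (rule power2_le_imp_le) (simp add: add_pos_nonneg)
qed

lemma power_series_coeff_bound:
  fixes f :: "complex \<Rightarrow> complex"
  assumes "f holomorphic_on ball 0 R"
    and "\<And>z. z \<in> ball 0 R \<Longrightarrow> (\<lambda>m. c m * z ^ m) sums f z"
    and "0 < r" "r < R"
    and "\<And>z. cmod z = r \<Longrightarrow> cmod (f z) \<le> M"
  shows "cmod (c m) \<le> M / r ^ m"
proof -
  have "eventually (\<lambda>z. z \<in> ball 0 R) (nhds 0)"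
    using assms(3,4) by (intro eventually_nhds_in_open) auto
  then have "eventually (\<lambda>z. eval_fps (Abs_fps c) z = f z) (nhds 0)"
    by (rule eventually_mono) (use assms(2) in \<open>auto simp: eval_fps_def sums_iff\<close>)
  moreover have "conv_radius c \<ge> norm (of_real r :: complex)"
    using assms(2)[of "of_real r"] assms(3,4) by (intro conv_radius_geI) (auto simp: sums_iff)
  then have "fps_conv_radius (Abs_fps c) > 0"
    using assms(3) by (auto simp: fps_conv_radius_def elim!: less_le_trans[rotated])
  ultimately have "f has_fps_expansion Abs_fps c"
    by (simp add: has_fps_expansion_def)
  then have coeff: "c m = (deriv ^^ m) f 0 / fact m"
    using fps_nth_fps_expansion[of f "Abs_fps c" m] by simp
  have "norm ((deriv ^^ m) f 0) \<le> fact m * M / r ^ m"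
  proof (rule Cauchy_inequality)
    show "f holomorphic_on ball 0 r"
      using assms(4) by (intro holomorphic_on_subset[OF assms(1)]) auto
    show "continuous_on (cball 0 r) f"
      using assms(4) by (intro holomorphic_on_imp_continuous_on holomorphic_on_subset[OF assms(1)]) auto
  qed (use assms(3,5) in auto)
  then show ?thesis
    by (simp add: coeff norm_divide field_simps)
qed

lemma disk_aut_power_coeff_bound:
  assumes "cmod a < 1" and "0 < r" "r < 1"
    and "\<And>z. z \<in> ball 0 1 \<Longrightarrow> (\<lambda>m. c m * z ^ m) sums (disk_aut a z ^ n)"
  shows "cmod (c m) \<le> ((cmod a + r) / (1 + cmod a * r)) ^ n / r ^ m"
proof (rule power_series_coeff_bound[OF _ assms(4) assms(2,3)])
  show "(\<lambda>z. disk_aut a z ^ n) holomorphic_on ball 0 1"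
    using disk_aut_holomorphic[OF assms(1)] by (intro holomorphic_intros)
  show "cmod (disk_aut a z ^ n) \<le> ((cmod a + r) / (1 + cmod a * r)) ^ n" if "cmod z = r" for z
    using norm_disk_aut_le[OF assms(1), of z] that assms(3)
    unfolding norm_power by (intro power_mono) auto
qed

lemma sum_div_one_plus_prod_lt_1:
  fixes s t :: real
  assumes "0 \<le> s" "s < 1" "0 \<le> t" "t < 1"
  shows "(s + t) / (1 + s * t) < 1"
proof -
  have "0 < (1 - s) * (1 - t)"
    using assms by simp
  then show ?thesis
    using assms by (simp add: algebra_simps add_pos_nonneg)
qed

theorem mainTheorem8:
  fixes a :: real and c :: "nat \<Rightarrow> nat \<Rightarrow> complex"
  assumes "0 < a" and "a < 1"
    and "\<And>n z. z \<in> ball 0 1 \<Longrightarrow>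
           (\<lambda>m. c m n * z ^ m) sums (disk_aut (complex_of_real a) z ^ n)"
  shows "\<forall>\<alpha>::real. \<alpha> > 0 \<longrightarrow> (\<exists>\<rho>::real. \<rho> > 0 \<and>
           (\<forall>m n::nat. cmod (c m n) \<le> exp (- \<alpha> * (\<rho> * real n - real m))))"
proof (intro allI impI)
  fix \<alpha> :: real
  assume "\<alpha> > 0"
  define r where "r = exp (- \<alpha>)"
  define q where "q = (a + r) / (1 + a * r)"
  have "0 < r" "r < 1"
    using \<open>\<alpha> > 0\<close> by (auto simp: r_def)
  then have "0 < q" "q < 1"
    using assms(1,2) sum_div_one_plus_prod_lt_1[of a r] by (auto simp: q_def add_pos_pos)
  define \<rho> where "\<rho> = - ln q / \<alpha>"
  have "q ^ n / r ^ m = exp (- \<alpha> * (\<rho> * real n - real m))" for m n :: nat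
  proof -
    have "q = exp (- \<alpha> * \<rho>)"
      using \<open>\<alpha> > 0\<close> \<open>0 < q\<close> by (simp add: \<rho>_def)
    then show ?thesis
      by (simp add: r_def exp_of_nat_mult[symmetric] exp_diff[symmetric] algebra_simps)
  qed
  moreover have "cmod (c m n) \<le> q ^ n / r ^ m" for m n
    using disk_aut_power_coeff_bound[of "complex_of_real a" r "\<lambda>m. c m n"] assms \<open>0 < r\<close> \<open>r < 1\<close>
    by (simp add: q_def)
  moreover have "\<rho> > 0"
    using \<open>\<alpha> > 0\<close> \<open>0 < q\<close> \<open>q < 1\<close> by (simp add: \<rho>_def divide_neg_pos)
  ultimately show "\<exists>\<rho>>0. \<forall>m n. cmod (c m n) \<le> exp (- \<alpha> * (\<rho> * real n - real m))"
    by metis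
qed

end
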